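(* Let $SI$, $UI$, $CI$ be a nonnegative bivariate information decomposition. Define the extractable shared information $$\overline{SI}(S;X_1,X_2):=\sup_{f:\mathcal{S}\to\mathcal{S}'} SI(f(S);X_1,X_2),$$ the supremum being over all functions from the alphabet $\mathcal{S}$ of $S$ to an arbitrary finite set $\mathcal{S}'$, and define $$\overline{UI}^*(S;X_1\setminus X_2):=I(S;X_1)-\overline{SI}(S;X_1,X_2),\quad \overline{UI}^*(S;X_2\setminus X_1):=I(S;X_2)-\overline{SI}(S;X_1,X_2),$$ $$\overline{CI}^*(S;X_1,X_2):=I(S;X_1X_2)-\overline{SI}(S;X_1,X_2)-\overline{UI}^*(S;X_1\setminus X_2)-\overline{UI}^*(S;X_2\setminus X_1).$$ Then $\overline{SI}$, $\overline{UI}^*(S;X_1\setminus X_2)$, $\overline{UI}^*(S;X_2\setminus X_1)$ and $\overline{CI}^*$ are nonnegative, and moreover: (a) $\overline{SI}(S;X_1,X_2)\ge SI(S;X_1,X_2)$; (b) $\overline{CI}^*(S;X_1,X_2)\ge CI(S;X_1,X_2)$; (c) if $f^*$ is a function achieving the supremum in the definition of $\overline{SI}(S;X_1,X_2)$, then $UI(f^*(S);X_1\setminus X_2)\le \overline{UI}^*(S;X_1\setminus X_2)\le UI(S;X_1\setminus X_2)$.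
   Context: All random variables have finite alphabets. A nonnegative bivariate information decomposition consists of nonnegative functions $SI(S;X_1,X_2)$, $UI(S;X_1\setminus X_2)$, $UI(S;X_2\setminus X_1)$, $CI(S;X_1,X_2)$, defined for every joint distribution of $(S,X_1,X_2)$ with arbitrary finite alphabets and depending continuously on it, such that $I(S;X_1X_2)=SI(S;X_1,X_2)+CI(S;X_1,X_2)+UI(S;X_1\setminus X_2)+UI(S;X_2\setminus X_1)$, $I(S;X_1)=SI(S;X_1,X_2)+UI(S;X_1\setminus X_2)$ and $I(S;X_2)=SI(S;X_1,X_2)+UI(S;X_2\setminus X_1)$, where $I$ denotes mutual information and $I(S;X_1X_2)$ is the mutual information between $S$ and the pair $(X_1,X_2)$. *)

theory Defs
  imports "HOL-Probability.Probability"
begin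

definition mi :: "('a \<times> 'b) pmf \<Rightarrow> real" where
  "mi p = (\<Sum>(x, y)\<in>set_pmf p.
      pmf p (x, y) * log 2 (pmf p (x, y) / (pmf (map_pmf fst p) x * pmf (map_pmf snd p) y)))"

text \<open>Joint distributions of (S, X1, X2); finite alphabets are encoded as finite subsets of nat.\<close>
type_synonym dist3 = "(nat \<times> nat \<times> nat) pmf"

definition I_S_X1 :: "dist3 \<Rightarrow> real" where
  "I_S_X1 P = mi (map_pmf (\<lambda>(s, x1, x2). (s, x1)) P)"

definition I_S_X2 :: "dist3 \<Rightarrow> real" where
  "I_S_X2 P = mi (map_pmf (\<lambda>(s, x1, x2). (s, x2)) P)"

definition I_S_X12 :: "dist3 \<Rightarrow> real" where
  "I_S_X12 P = mi (map_pmf (\<lambda>(s, x1, x2). (s, (x1, x2))) P)"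

text \<open>Continuity: for every fixed finite alphabet, the functional depends continuously
  on the probability vector (product topology on functions).\<close>
definition cont_dist :: "(dist3 \<Rightarrow> real) \<Rightarrow> bool" where
  "cont_dist F \<longleftrightarrow> (\<forall>A. finite A \<longrightarrow>
      continuous_on (pmf ` {P. set_pmf P \<subseteq> A}) (\<lambda>q. F (embed_pmf q)))"

definition nonneg_decomp ::
  "(dist3 \<Rightarrow> real) \<Rightarrow> (dist3 \<Rightarrow> real) \<Rightarrow> (dist3 \<Rightarrow> real) \<Rightarrow> (dist3 \<Rightarrow> real) \<Rightarrow> bool" where
  "nonneg_decomp SI UI1 UI2 CI \<longleftrightarrow>
     (\<forall>P. finite (set_pmf P) \<longrightarrow>
        SI P \<ge> 0 \<and> UI1 P \<ge> 0 \<and> UI2 P \<ge> 0 \<and> CI P \<ge> 0 \<and>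
        I_S_X12 P = SI P + CI P + UI1 P + UI2 P \<and>
        I_S_X1 P = SI P + UI1 P \<and>
        I_S_X2 P = SI P + UI2 P) \<and>
     cont_dist SI \<and> cont_dist UI1 \<and> cont_dist UI2 \<and> cont_dist CI"

definition relabel :: "(nat \<Rightarrow> nat) \<Rightarrow> dist3 \<Rightarrow> dist3" where
  "relabel f P = map_pmf (\<lambda>(s, x1, x2). (f s, x1, x2)) P"

definition SIbar :: "(dist3 \<Rightarrow> real) \<Rightarrow> dist3 \<Rightarrow> real" where
  "SIbar SI P = (SUP f :: nat \<Rightarrow> nat. SI (relabel f P))"

definition UIbar1 :: "(dist3 \<Rightarrow> real) \<Rightarrow> dist3 \<Rightarrow> real" where
  "UIbar1 SI P = I_S_X1 P - SIbar SI P"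

definition UIbar2 :: "(dist3 \<Rightarrow> real) \<Rightarrow> dist3 \<Rightarrow> real" where
  "UIbar2 SI P = I_S_X2 P - SIbar SI P"

definition CIbar :: "(dist3 \<Rightarrow> real) \<Rightarrow> dist3 \<Rightarrow> real" where
  "CIbar SI P = I_S_X12 P - SIbar SI P - UIbar1 SI P - UIbar2 SI P"

end

theory Submission
  imports Defs
begin

text \<open>Relabelling S cannot increase I(S;X1) or I(S;X2): this is the data processing inequality,
  which for finite supports follows from the log-sum inequality applied to the fibres of the
  relabelling. Hence SI(f(S);X1,X2) \<le> I(f(S);X1) \<le> I(S;X1), and likewise for X2, so the supremum
  defining the extractable shared information is finite and lies between SI(S;X1,X2) (take f = id)
  and min(I(S;X1), I(S;X2)). All claims then follow by linear arithmetic from the decomposition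
  identities, those of (c) by applying them to the distribution of (f*(S), X1, X2).\<close>

lemma log_sum_inequality_ln:
  fixes a b :: "'i \<Rightarrow> real"
  assumes "finite I" and "I \<noteq> {}" and pos: "\<And>i. i \<in> I \<Longrightarrow> a i > 0 \<and> b i > 0"
  shows "sum a I * ln (sum a I / sum b I) \<le> (\<Sum>i\<in>I. a i * ln (a i / b i))"
proof -
  define A B where "A = sum a I" and "B = sum b I"
  have A: "A > 0" and B: "B > 0"
    unfolding A_def B_def using assms by (auto intro: sum_pos)
  \<comment> \<open>each summand is bounded below via ln x \<le> x - 1 at x = b i A / (a i B)\<close>
  have summand_bound: "a i - b i * (A / B) \<le> a i * ln (a i / b i) - a i * ln (A / B)" if "i \<in> I" for i
  proof -
    have ai: "a i > 0" and bi: "b i > 0" using pos[OF that] by auto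
    define r where "r = (b i * A) / (a i * B)"
    have "a i * (1 - r) \<le> a i * (- ln r)"
      using ai bi A B ln_le_minus_one[of r] by (intro mult_left_mono) (auto simp: r_def)
    moreover have "a i * (1 - r) = a i - b i * (A / B)"
      using ai B by (simp add: r_def field_simps)
    moreover have "- ln r = ln (a i / b i) - ln (A / B)"
      using ai bi A B by (simp add: r_def ln_div ln_mult)
    ultimately show ?thesis by (simp add: right_diff_distrib)
  qed
  have "0 = A - B * (A / B)" using B by simp
  also have "\<dots> = (\<Sum>i\<in>I. a i - b i * (A / B))"
    by (simp add: A_def B_def sum_subtractf sum_distrib_right sum_divide_distrib)
  also have "\<dots> \<le> (\<Sum>i\<in>I. a i * ln (a i / b i) - a i * ln (A / B))"
    using summand_bound by (rule sum_mono)
  also have "\<dots> = (\<Sum>i\<in>I. a i * ln (a i / b i)) - A * ln (A / B)"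
    by (simp add: A_def sum_subtractf sum_distrib_right)
  finally show ?thesis unfolding A_def B_def by simp
qed

lemma log_sum_inequality:
  fixes a b :: "'i \<Rightarrow> real" and c :: real
  assumes "c > 1" and "finite I" and "I \<noteq> {}" and "\<And>i. i \<in> I \<Longrightarrow> a i > 0 \<and> b i > 0"
  shows "sum a I * log c (sum a I / sum b I) \<le> (\<Sum>i\<in>I. a i * log c (a i / b i))"
proof -
  have "sum a I * ln (sum a I / sum b I) / ln c \<le> (\<Sum>i\<in>I. a i * ln (a i / b i)) / ln c"
    using log_sum_inequality_ln[OF assms(2-4)] \<open>c > 1\<close> by (simp add: divide_right_mono)
  then show ?thesis by (simp add: log_def sum_divide_distrib)
qed

lemma pmf_map_pmf_finite:
  assumes "finite (set_pmf q)"
  shows "pmf (map_pmf g q) z = (\<Sum>p\<in>{p\<in>set_pmf q. g p = z}. pmf q p)"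
proof -
  have "pmf (map_pmf g q) z = measure q (g -` {z} \<inter> set_pmf q)"
    by (simp add: pmf_map measure_Int_set_pmf)
  also have "g -` {z} \<inter> set_pmf q = {p\<in>set_pmf q. g p = z}" by auto
  finally show ?thesis using assms by (simp add: measure_measure_pmf_finite)
qed

lemma sum_pmf_fst_fibre_le:
  fixes q1 :: "'a pmf" and J :: "('a \<times> 'b) set" and f :: "'a \<Rightarrow> 'c"
  assumes "finite J" and "\<And>p. p \<in> J \<Longrightarrow> f (fst p) = t \<and> snd p = y"
  shows "(\<Sum>p\<in>J. pmf q1 (fst p)) \<le> pmf (map_pmf f q1) t"
proof -
  have "inj_on fst J" using assms(2) by (intro inj_onI) (metis prod.collapse)
  then have "(\<Sum>p\<in>J. pmf q1 (fst p)) = measure q1 (fst ` J)"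
    using assms(1) by (simp add: sum.reindex measure_measure_pmf_finite)
  also have "\<dots> \<le> measure q1 (f -` {t})"
    using assms(2) by (intro measure_pmf.finite_measure_mono) auto
  finally show ?thesis by (simp add: pmf_map)
qed

lemma mi_summand_map_fst_le:
  fixes q :: "('a \<times> 'b) pmf" and f :: "'a \<Rightarrow> 'c" and t :: 'c and y :: 'b
  defines "q1 \<equiv> map_pmf fst q" and "q2 \<equiv> map_pmf snd q"
    and "q' \<equiv> map_pmf (\<lambda>(u, v). (f u, v)) q"
    and "J \<equiv> {p\<in>set_pmf q. (\<lambda>(u, v). (f u, v)) p = (t, y)}"
  assumes fin: "finite (set_pmf q)" and "J \<noteq> {}"
  shows "pmf q' (t, y) * log 2 (pmf q' (t, y) / (pmf (map_pmf f q1) t * pmf q2 y))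
    \<le> (\<Sum>p\<in>J. pmf q p * log 2 (pmf q p / (pmf q1 (fst p) * pmf q2 (snd p))))"
proof -
  define b where "b = (\<lambda>p. pmf q1 (fst p) * pmf q2 (snd p))"
  have finJ: "finite J" using fin by (simp add: J_def)
  have fibre: "f (fst p) = t \<and> snd p = y" if "p \<in> J" for p
    using that by (auto simp: J_def split_beta)
  have pos: "pmf q p > 0 \<and> b p > 0" if "p \<in> J" for p
  proof -
    have "p \<in> set_pmf q" using that by (simp add: J_def)
    moreover have "fst p \<in> set_pmf q1" "snd p \<in> set_pmf q2"
      using calculation by (auto simp: q1_def q2_def)
    ultimately show ?thesis by (simp add: b_def pmf_positive)
  qed
  have mass: "pmf q' (t, y) = sum (pmf q) J"
    unfolding q'_def J_def using fin by (rule pmf_map_pmf_finite)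
  have A: "sum (pmf q) J > 0" and B: "sum b J > 0"
    using finJ \<open>J \<noteq> {}\<close> pos by (auto intro: sum_pos)
  have "sum b J = (\<Sum>p\<in>J. pmf q1 (fst p)) * pmf q2 y"
    unfolding b_def sum_distrib_right using fibre by (intro sum.cong) auto
  also have "\<dots> \<le> pmf (map_pmf f q1) t * pmf q2 y"
    using sum_pmf_fst_fibre_le[OF finJ fibre] by (intro mult_right_mono) auto
  finally have marginal: "sum b J \<le> pmf (map_pmf f q1) t * pmf q2 y" .
  have "pmf q' (t, y) * log 2 (pmf q' (t, y) / (pmf (map_pmf f q1) t * pmf q2 y))
      \<le> sum (pmf q) J * log 2 (sum (pmf q) J / sum b J)"
    unfolding mass using A B marginal
    by (intro mult_left_mono log_le_cancel_iff[THEN iffD2])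
       (auto intro: divide_left_mono divide_pos_pos)
  also have "\<dots> \<le> (\<Sum>p\<in>J. pmf q p * log 2 (pmf q p / b p))"
    using finJ \<open>J \<noteq> {}\<close> pos by (intro log_sum_inequality) auto
  finally show ?thesis by (simp add: b_def)
qed

lemma mi_map_fst_le:
  fixes q :: "('a \<times> 'b) pmf" and f :: "'a \<Rightarrow> 'c"
  assumes fin: "finite (set_pmf q)"
  shows "mi (map_pmf (\<lambda>(x, y). (f x, y)) q) \<le> mi q"
proof -
  define g where "g = (\<lambda>(x::'a, y::'b). (f x, y))"
  define q' where "q' = map_pmf g q"
  define h where "h = (\<lambda>p. pmf q p * log 2 (pmf q p /
                             (pmf (map_pmf fst q) (fst p) * pmf (map_pmf snd q) (snd p))))"
  have supp: "set_pmf q' = g ` set_pmf q" by (simp add: q'_def)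
  have fst_q': "map_pmf fst q' = map_pmf f (map_pmf fst q)"
    and snd_q': "map_pmf snd q' = map_pmf snd q"
    unfolding q'_def map_pmf_comp by (auto simp: g_def split_beta intro: map_pmf_cong)
  have "mi q' = (\<Sum>(t, y)\<in>set_pmf q'. pmf q' (t, y) *
      log 2 (pmf q' (t, y) / (pmf (map_pmf f (map_pmf fst q)) t * pmf (map_pmf snd q) y)))"
    by (simp add: mi_def fst_q' snd_q')
  also have "\<dots> \<le> (\<Sum>z\<in>set_pmf q'. sum h {p\<in>set_pmf q. g p = z})"
  proof (rule sum_mono, clarify)
    fix t y assume "(t, y) \<in> set_pmf q'"
    then have fibre_ne: "{p\<in>set_pmf q. g p = (t, y)} \<noteq> {}" using supp by force
    then show "pmf q' (t, y) * log 2 (pmf q' (t, y) /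
          (pmf (map_pmf f (map_pmf fst q)) t * pmf (map_pmf snd q) y))
        \<le> sum h {p\<in>set_pmf q. g p = (t, y)}"
      using mi_summand_map_fst_le[OF fin, of f t y] fibre_ne unfolding q'_def g_def h_def by blast
  qed
  also have "\<dots> = sum h (set_pmf q)"
    using fin supp by (intro sum.group) auto
  also have "\<dots> = mi q" by (simp add: mi_def h_def split_beta)
  finally show ?thesis by (simp add: q'_def g_def)
qed

lemma I_S_X1_relabel_le: "finite (set_pmf P) \<Longrightarrow> I_S_X1 (relabel f P) \<le> I_S_X1 P"
  using mi_map_fst_le[of "map_pmf (\<lambda>(s, x1, x2). (s, x1)) P" f]
  by (simp add: I_S_X1_def relabel_def map_pmf_comp split_beta)

lemma I_S_X2_relabel_le: "finite (set_pmf P) \<Longrightarrow> I_S_X2 (relabel f P) \<le> I_S_X2 P"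
  using mi_map_fst_le[of "map_pmf (\<lambda>(s, x1, x2). (s, x2)) P" f]
  by (simp add: I_S_X2_def relabel_def map_pmf_comp split_beta)

lemma relabel_id [simp]: "relabel id P = P"
  by (simp add: relabel_def split_beta')

lemma finite_set_pmf_relabel: "finite (set_pmf P) \<Longrightarrow> finite (set_pmf (relabel f P))"
  by (simp add: relabel_def)

lemma nonneg_decompD:
  assumes "nonneg_decomp SI UI1 UI2 CI" and "finite (set_pmf P)"
  shows "SI P \<ge> 0" "UI1 P \<ge> 0" "UI2 P \<ge> 0" "CI P \<ge> 0"
    and "I_S_X12 P = SI P + CI P + UI1 P + UI2 P"
    and "I_S_X1 P = SI P + UI1 P" and "I_S_X2 P = SI P + UI2 P"
  using assms unfolding nonneg_decomp_def by blast+

lemma SI_relabel_le_I_S_X1: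
  assumes "nonneg_decomp SI UI1 UI2 CI" and "finite (set_pmf P)"
  shows "SI (relabel f P) \<le> I_S_X1 P"
  using nonneg_decompD(2,6)[OF assms(1) finite_set_pmf_relabel[OF assms(2)], of f]
    I_S_X1_relabel_le[OF assms(2), of f] by linarith

lemma SI_relabel_le_I_S_X2:
  assumes "nonneg_decomp SI UI1 UI2 CI" and "finite (set_pmf P)"
  shows "SI (relabel f P) \<le> I_S_X2 P"
  using nonneg_decompD(3,7)[OF assms(1) finite_set_pmf_relabel[OF assms(2)], of f]
    I_S_X2_relabel_le[OF assms(2), of f] by linarith

lemma SI_le_SIbar:
  assumes "nonneg_decomp SI UI1 UI2 CI" and "finite (set_pmf P)"
  shows "SI P \<le> SIbar SI P"
proof -
  have "bdd_above (range (\<lambda>f. SI (relabel f P)))"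
    using SI_relabel_le_I_S_X1[OF assms] by (intro bdd_aboveI) auto
  from cSUP_upper[OF UNIV_I this, of id] show ?thesis by (simp add: SIbar_def)
qed

lemma SIbar_le_I_S_X1:
  assumes "nonneg_decomp SI UI1 UI2 CI" and "finite (set_pmf P)"
  shows "SIbar SI P \<le> I_S_X1 P"
  unfolding SIbar_def using SI_relabel_le_I_S_X1[OF assms] by (intro cSUP_least) auto

lemma SIbar_le_I_S_X2:
  assumes "nonneg_decomp SI UI1 UI2 CI" and "finite (set_pmf P)"
  shows "SIbar SI P \<le> I_S_X2 P"
  unfolding SIbar_def using SI_relabel_le_I_S_X2[OF assms] by (intro cSUP_least) auto

theorem lemma2:
  fixes SI UI1 UI2 CI :: "dist3 \<Rightarrow> real" and P :: dist3
  assumes "nonneg_decomp SI UI1 UI2 CI"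
    and "finite (set_pmf P)"
  shows "SIbar SI P \<ge> 0 \<and> UIbar1 SI P \<ge> 0 \<and> UIbar2 SI P \<ge> 0 \<and> CIbar SI P \<ge> 0 \<and>
         SIbar SI P \<ge> SI P \<and>
         CIbar SI P \<ge> CI P \<and>
         (\<forall>f. SI (relabel f P) = SIbar SI P \<longrightarrow>
               UI1 (relabel f P) \<le> UIbar1 SI P \<and> UIbar1 SI P \<le> UI1 P)"
proof -
  note decomp = nonneg_decompD[OF assms]
  note bounds = SI_le_SIbar[OF assms] SIbar_le_I_S_X1[OF assms] SIbar_le_I_S_X2[OF assms]
  have optimal_relabel: "UI1 (relabel f P) \<le> UIbar1 SI P \<and> UIbar1 SI P \<le> UI1 P"
    if "SI (relabel f P) = SIbar SI P" for f
    using that bounds decomp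
      nonneg_decompD(6)[OF assms(1) finite_set_pmf_relabel[OF assms(2)], of f]
      I_S_X1_relabel_le[OF assms(2), of f]
    unfolding UIbar1_def by linarith
  have "SIbar SI P \<ge> 0 \<and> UIbar1 SI P \<ge> 0 \<and> UIbar2 SI P \<ge> 0 \<and> CIbar SI P \<ge> 0 \<and>
      SIbar SI P \<ge> SI P \<and> CIbar SI P \<ge> CI P"
    using bounds decomp unfolding UIbar1_def UIbar2_def CIbar_def by (intro conjI; linarith)
  with optimal_relabel show ?thesis by blast
qed

end
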